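(* Assume that for each $r\in\mathbb{N}$ the operator $L_r:Lip_d(I)\to Lip_d(I)$ is Lipschitz with Lipschitz constant $|L_r|$, and $|L|:=\sup_{r\in\mathbb{N}}|L_r|<\infty$. Then the non-stationary fractal operator $\mathfrak{F}^\alpha_b:Lip_d(I)\to C(I)$, $\mathfrak{F}^\alpha_b(f)=f^\alpha_b$, is Lipschitz and its Lipschitz constant satisfies $$|\mathfrak{F}^\alpha_b|\le\frac{1+|L|\,\|\alpha\|_\infty}{1-\|\alpha\|_\infty}.$$
   Context: Setting: $I=[x_0,x_N]$ with partition $\Delta: x_0<x_1<\dots<x_N$, $I_i=[x_{i-1},x_i]$, $l_i:I\to I_i$ the increasing affine bijection $l_i(x)=\frac{x_i-x_{i-1}}{x_N-x_0}x+\frac{x_Nx_{i-1}-x_0x_i}{x_N-x_0}$, and $Q_i=l_i^{-1}$. Scaling functions $\alpha_{i,r}:I\to\mathbb{R}$ ($i=1,\dots,N$, $r\in\mathbb{N}$) are continuous with $\|\alpha\|_\infty:=\sup_{r}\max_i\|\alpha_{i,r}\|_\infty<1$. $Lip_d(I)$ ($0<d\le1$) is the space of real functions $g$ on $I$ with $\sup_{x\ne y}|g(x)-g(y)|/|x-y|^d<\infty$, regarded as a subset of $C(I)$ with the supremum norm; Lipschitz properties of operators refer to the supremum norm (an operator $\mathcal{T}$ is Lipschitz if $\|\mathcal{T}u-\mathcal{T}v\|\le q\|u-v\|$ for some $q>0$ and all $u,v$; the best such $q$ is its Lipschitz constant $|\mathcal{T}|$). $L_r:Lip_d(I)\to Lip_d(I)$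 are operators (not necessarily linear) with $(L_rg)(x_0)=g(x_0)$, $(L_rg)(x_N)=g(x_N)$ for all $g$, and $\sup_r\|L_r\|_\infty<\infty$, where $\|L_r\|_\infty=\sup_{g\ne0}\|L_rg\|_\infty/\|g\|_\infty$. Non-stationary $\alpha$-fractal function: for $f\in C(I)$ and base functions $b_r\in C(I)$ with $b_r(x_0)=f(x_0)$, $b_r(x_N)=f(x_N)$, $\sup_r\|b_r\|_\infty<\infty$, let $C_f(I)=\{g\in C(I):g(x_0)=f(x_0),g(x_N)=f(x_N)\}$ and $T^{\alpha_r}:C_f(I)\to C_f(I)$, $(T^{\alpha_r}g)(x)=f(x)+\alpha_{i,r}(Q_i(x))(g-b_r)(Q_i(x))$ for $x\in I_i$. For every $g\in C_f(I)$, $T^{\alpha_1}\circ\cdots\circ T^{\alpha_r}g$ converges uniformly to a function independent of $g$; this is the non-stationary $\alpha$-fractal function. $f^\alpha_b$ denotes it for $f\in Lip_d(I)$ with $b_r=L_rf$. *)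

theory Defs
  imports "HOL-Analysis.Analysis"
begin

definition Ivl :: "(nat \<Rightarrow> real) \<Rightarrow> nat \<Rightarrow> real set" where
  "Ivl xs N = {xs 0 .. xs N}"

text \<open>The affine map l_i : I \<rightarrow> I_i and its inverse Q_i.\<close>
definition lmap :: "(nat \<Rightarrow> real) \<Rightarrow> nat \<Rightarrow> nat \<Rightarrow> real \<Rightarrow> real" where
  "lmap xs N i x = (xs i - xs (i - 1)) / (xs N - xs 0) * x
      + (xs N * xs (i - 1) - xs 0 * xs i) / (xs N - xs 0)"

definition Qmap :: "(nat \<Rightarrow> real) \<Rightarrow> nat \<Rightarrow> nat \<Rightarrow> real \<Rightarrow> real" where
  "Qmap xs N i y = (y - (xs N * xs (i - 1) - xs 0 * xs i) / (xs N - xs 0))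
      / ((xs i - xs (i - 1)) / (xs N - xs 0))"

text \<open>Index of the subinterval I_i = [x_{i-1}, x_i] containing x (the least one;
  at interior nodes both choices give the same value by the join-up conditions).\<close>
definition seg_index :: "(nat \<Rightarrow> real) \<Rightarrow> nat \<Rightarrow> real \<Rightarrow> nat" where
  "seg_index xs N x = (LEAST i. 1 \<le> i \<and> x \<le> xs i)"

definition supn :: "real set \<Rightarrow> (real \<Rightarrow> real) \<Rightarrow> real" where
  "supn I g = Sup ((\<lambda>x. \<bar>g x\<bar>) ` I)"

definition Lipd :: "real \<Rightarrow> real set \<Rightarrow> (real \<Rightarrow> real) set" where
  "Lipd d I = {g. \<exists>C. \<forall>x\<in>I. \<forall>y\<in>I. \<bar>g x - g y\<bar> \<le> C * \<bar>x - y\<bar> powr d}"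

definition op_lipschitz :: "real set \<Rightarrow> (real \<Rightarrow> real) set \<Rightarrow> ((real \<Rightarrow> real) \<Rightarrow> (real \<Rightarrow> real)) \<Rightarrow> bool" where
  "op_lipschitz I D T \<longleftrightarrow> (\<exists>q>0. \<forall>u\<in>D. \<forall>v\<in>D. supn I (\<lambda>x. T u x - T v x) \<le> q * supn I (\<lambda>x. u x - v x))"

definition op_lip_const :: "real set \<Rightarrow> (real \<Rightarrow> real) set \<Rightarrow> ((real \<Rightarrow> real) \<Rightarrow> (real \<Rightarrow> real)) \<Rightarrow> real" where
  "op_lip_const I D T = Inf {q. q > 0 \<and> (\<forall>u\<in>D. \<forall>v\<in>D. supn I (\<lambda>x. T u x - T v x) \<le> q * supn I (\<lambda>x. u x - v x))}"

definition alpha_norm :: "(nat \<Rightarrow> real) \<Rightarrow> nat \<Rightarrow> (nat \<Rightarrow> nat \<Rightarrow> real \<Rightarrow> real) \<Rightarrow> real" where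
  "alpha_norm xs N \<alpha> = Sup {\<bar>\<alpha> i r x\<bar> | i r x. 1 \<le> i \<and> i \<le> N \<and> x \<in> Ivl xs N}"

definition Cf :: "(nat \<Rightarrow> real) \<Rightarrow> nat \<Rightarrow> (real \<Rightarrow> real) \<Rightarrow> (real \<Rightarrow> real) set" where
  "Cf xs N f = {g. continuous_on (Ivl xs N) g \<and> g (xs 0) = f (xs 0) \<and> g (xs N) = f (xs N)}"

definition Top :: "(nat \<Rightarrow> real) \<Rightarrow> nat \<Rightarrow> (nat \<Rightarrow> nat \<Rightarrow> real \<Rightarrow> real) \<Rightarrow> (real \<Rightarrow> real)
    \<Rightarrow> (nat \<Rightarrow> real \<Rightarrow> real) \<Rightarrow> nat \<Rightarrow> (real \<Rightarrow> real) \<Rightarrow> (real \<Rightarrow> real)" where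
  "Top xs N \<alpha> f b r g = (\<lambda>x. let i = seg_index xs N x; y = Qmap xs N i x
      in f x + \<alpha> i r y * (g y - b r y))"

text \<open>Forward composition T^{alpha_1} o ... o T^{alpha_n}
  (the sequence index r = 1,2,... is encoded as r = 0,1,...).\<close>
fun Tcomp :: "(nat \<Rightarrow> real) \<Rightarrow> nat \<Rightarrow> (nat \<Rightarrow> nat \<Rightarrow> real \<Rightarrow> real) \<Rightarrow> (real \<Rightarrow> real)
    \<Rightarrow> (nat \<Rightarrow> real \<Rightarrow> real) \<Rightarrow> nat \<Rightarrow> (real \<Rightarrow> real) \<Rightarrow> (real \<Rightarrow> real)" where
  "Tcomp xs N \<alpha> f b 0 g = g"
| "Tcomp xs N \<alpha> f b (Suc n) g = Tcomp xs N \<alpha> f b n (Top xs N \<alpha> f b n g)"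

text \<open>The non-stationary alpha-fractal function: the common uniform limit on I of the
  compositions, for all starting functions g in C_f(I); normalised to 0 outside I.\<close>
definition ns_fractal :: "(nat \<Rightarrow> real) \<Rightarrow> nat \<Rightarrow> (nat \<Rightarrow> nat \<Rightarrow> real \<Rightarrow> real) \<Rightarrow> (real \<Rightarrow> real)
    \<Rightarrow> (nat \<Rightarrow> real \<Rightarrow> real) \<Rightarrow> (real \<Rightarrow> real)" where
  "ns_fractal xs N \<alpha> f b = (THE \<phi>. (\<forall>x. x \<notin> Ivl xs N \<longrightarrow> \<phi> x = 0) \<and>
      (\<forall>g\<in>Cf xs N f. uniform_limit (Ivl xs N) (\<lambda>n. Tcomp xs N \<alpha> f b n g) \<phi> sequentially))"

definition frac_op :: "(nat \<Rightarrow> real) \<Rightarrow> nat \<Rightarrow> (nat \<Rightarrow> nat \<Rightarrow> real \<Rightarrow> real)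
    \<Rightarrow> (nat \<Rightarrow> (real \<Rightarrow> real) \<Rightarrow> (real \<Rightarrow> real)) \<Rightarrow> (real \<Rightarrow> real) \<Rightarrow> (real \<Rightarrow> real)" where
  "frac_op xs N \<alpha> L f = ns_fractal xs N \<alpha> f (\<lambda>r. L r f)"

end

theory Submission
  imports Defs
begin

text \<open>
  At each point x, every map T^(\<alpha>_r) acts as g \<mapsto> f(x) + k (g - b_r)(y) for some
  y \<in> I and |k| \<le> a = \<parallel>\<alpha>\<parallel>_\<infinity> < 1. By induction on the number of composed maps, the n-th
  iterates for the data (f, L_r f) and (h, L_r h), started at f and h, differ in sup norm by
  at most (\<parallel>f - h\<parallel> + a sup_r \<parallel>L_r f - L_r h\<parallel>) (1 + a + ... + a^(n-1)) + a^n \<parallel>f - h\<parallel>.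
  Letting n \<rightarrow> \<infinity> and using \<parallel>L_r f - L_r h\<parallel> \<le> |L| \<parallel>f - h\<parallel> gives
  \<parallel>f^\<alpha>_b - h^\<alpha>_b\<parallel> \<le> (1 + |L| a) / (1 - a) \<parallel>f - h\<parallel>.
\<close>

lemma Lipd_imp_continuous_on:
  assumes "0 < d" and "g \<in> Lipd d S"
  shows "continuous_on S g"
proof -
  obtain C where C: "\<And>x y. x \<in> S \<Longrightarrow> y \<in> S \<Longrightarrow> \<bar>g y - g x\<bar> \<le> C * \<bar>y - x\<bar> powr d"
    using assms(2) unfolding Lipd_def by blast
  have "((\<lambda>y. g y - g x) \<longlongrightarrow> 0) (at x within S)" if x: "x \<in> S" for x
  proof (rule Lim_null_comparison)
    show "\<forall>\<^sub>F y in at x within S. norm (g y - g x) \<le> C * \<bar>y - x\<bar> powr d"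
      using C x by (auto simp: eventually_at_filter)
    have "((\<lambda>y. \<bar>y - x\<bar> powr d) \<longlongrightarrow> 0) (at x within S)"
      using assms(1) by (intro tendsto_zero_powrI tendsto_eq_intros) auto
    then show "((\<lambda>y. C * \<bar>y - x\<bar> powr d) \<longlongrightarrow> 0) (at x within S)"
      by (rule tendsto_mult_right_zero)
  qed
  then show ?thesis
    unfolding continuous_on_def by (simp add: LIM_zero_iff)
qed

lemma abs_le_supn:
  assumes "continuous_on I g" "compact I" "x \<in> I"
  shows "\<bar>g x\<bar> \<le> supn I g"
proof -
  have "compact ((\<lambda>x. \<bar>g x\<bar>) ` I)"
    using assms(1,2) by (intro compact_continuous_image continuous_intros)
  then show ?thesis
    unfolding supn_def using assms(3)
    by (intro cSup_upper bounded_imp_bdd_above compact_imp_bounded) auto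
qed

lemma supn_le:
  assumes "I \<noteq> {}" "\<And>x. x \<in> I \<Longrightarrow> \<bar>g x\<bar> \<le> c"
  shows "supn I g \<le> c"
  unfolding supn_def using assms by (intro cSup_least) auto

lemma supn_nonneg:
  assumes "continuous_on I g" "compact I" "I \<noteq> {}"
  shows "0 \<le> supn I g"
  using abs_le_supn[OF assms(1,2)] assms(3) by force

lemma uniformly_convergent_on_summable_steps:
  fixes F :: "nat \<Rightarrow> 'a \<Rightarrow> 'b::banach"
  assumes "\<And>n x. x \<in> A \<Longrightarrow> norm (F (Suc n) x - F n x) \<le> M n" and "summable M"
  shows "uniformly_convergent_on A F"
proof -
  have "uniform_limit A (\<lambda>n x. \<Sum>i<n. F (Suc i) x - F i x) (\<lambda>x. \<Sum>i. F (Suc i) x - F i x) sequentially"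
    using assms by (rule Weierstrass_m_test)
  then have "uniform_limit A (\<lambda>n x. F 0 x + (\<Sum>i<n. F (Suc i) x - F i x))
      (\<lambda>x. F 0 x + (\<Sum>i. F (Suc i) x - F i x)) sequentially"
    by (intro uniform_limit_intros) auto
  moreover have "(\<lambda>n x. F 0 x + (\<Sum>i<n. F (Suc i) x - F i x)) = F"
    using sum_lessThan_telescope[of "\<lambda>i. F i x" for x] by (intro ext) simp
  ultimately show ?thesis
    unfolding uniformly_convergent_on_def by metis
qed

lemma uniform_limit_by_null_dist:
  fixes f g :: "nat \<Rightarrow> 'a \<Rightarrow> 'b::metric_space"
  assumes lim: "uniform_limit A f l sequentially"
    and close: "\<And>n x. x \<in> A \<Longrightarrow> dist (g n x) (f n x) \<le> M n" and null: "M \<longlonglongrightarrow> 0"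
  shows "uniform_limit A g l sequentially"
proof (rule uniform_limitI)
  fix e :: real assume "e > 0"
  have "\<forall>\<^sub>F n in sequentially. M n < e / 2"
    by (rule order_tendstoD(2)[OF null]) (use \<open>e > 0\<close> in simp)
  moreover have "\<forall>\<^sub>F n in sequentially. \<forall>x\<in>A. dist (f n x) (l x) < e / 2"
    by (rule uniform_limitD[OF lim]) (use \<open>e > 0\<close> in simp)
  ultimately show "\<forall>\<^sub>F n in sequentially. \<forall>x\<in>A. dist (g n x) (l x) < e"
  proof eventually_elim
    case (elim n)
    show ?case
    proof
      fix x assume "x \<in> A"
      have "dist (g n x) (l x) \<le> dist (g n x) (f n x) + dist (f n x) (l x)"
        by (rule dist_triangle)
      also have "\<dots> < e" using close[OF \<open>x \<in> A\<close>, of n] elim \<open>x \<in> A\<close> by fastforce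
      finally show "dist (g n x) (l x) < e" .
    qed
  qed
qed

lemma op_lip_const_nonneg:
  assumes "op_lipschitz I D T"
  shows "0 \<le> op_lip_const I D T"
  using assms unfolding op_lip_const_def op_lipschitz_def by (intro cInf_greatest) auto

lemma op_lipschitz_supn_le:
  assumes lip: "op_lipschitz I D T" and "u \<in> D" "v \<in> D"
    and nonneg: "0 \<le> supn I (\<lambda>x. u x - v x)"
  shows "supn I (\<lambda>x. T u x - T v x) \<le> op_lip_const I D T * supn I (\<lambda>x. u x - v x)"
proof -
  define Q where "Q = {q. q > 0 \<and> (\<forall>u\<in>D. \<forall>v\<in>D. supn I (\<lambda>x. T u x - T v x) \<le> q * supn I (\<lambda>x. u x - v x))}"
  have "Q \<noteq> {}" using lip unfolding op_lipschitz_def Q_def by auto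
  have q: "supn I (\<lambda>x. T u x - T v x) \<le> q * supn I (\<lambda>x. u x - v x)" if "q \<in> Q" for q
    using that \<open>u \<in> D\<close> \<open>v \<in> D\<close> unfolding Q_def by auto
  show ?thesis
  proof (cases "supn I (\<lambda>x. u x - v x) = 0")
    case True
    with q \<open>Q \<noteq> {}\<close> show ?thesis by fastforce
  next
    case False
    with nonneg have pos: "supn I (\<lambda>x. u x - v x) > 0" by simp
    have "supn I (\<lambda>x. T u x - T v x) / supn I (\<lambda>x. u x - v x) \<le> Inf Q"
      using \<open>Q \<noteq> {}\<close> q pos by (intro cInf_greatest) (auto simp: divide_le_eq)
    then show ?thesis
      unfolding op_lip_const_def Q_def[symmetric] using pos by (simp add: divide_le_eq)
  qed
qed

lemma op_lipschitz_with_const: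
  assumes "q > 0"
    and "\<And>u v. u \<in> D \<Longrightarrow> v \<in> D \<Longrightarrow> supn I (\<lambda>x. T u x - T v x) \<le> q * supn I (\<lambda>x. u x - v x)"
  shows "op_lipschitz I D T \<and> op_lip_const I D T \<le> q"
  using assms unfolding op_lipschitz_def op_lip_const_def
  by (auto intro!: cInf_lower bdd_belowI[of _ 0])

lemma partition_less:
  assumes "\<forall>i<N. xs i < xs (Suc i)" "j < k" "k \<le> N"
  shows "(xs j :: real) < xs k"
  using assms(2,3)
proof (induction k)
  case (Suc k)
  then show ?case
    using assms(1) by (cases "j = k") (auto intro: less_trans)
qed simp

lemma seg_index_bounds:
  assumes "1 \<le> N" "x \<in> Ivl xs N"
  defines "i \<equiv> seg_index xs N x"
  shows "1 \<le> i" "i \<le> N" "xs (i - 1) \<le> x" "x \<le> xs i"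
proof -
  let ?P = "\<lambda>i. 1 \<le> i \<and> x \<le> xs i"
  have "?P N" using assms by (auto simp: Ivl_def)
  then show "1 \<le> i" "x \<le> xs i" "i \<le> N"
    using LeastI[of ?P N] Least_le[of ?P N] unfolding i_def seg_index_def by auto
  show "xs (i - 1) \<le> x"
  proof (cases "i = 1")
    case True
    then show ?thesis using assms(2) by (simp add: Ivl_def)
  next
    case False
    with \<open>1 \<le> i\<close> have "\<not> (1 \<le> i - 1 \<and> x \<le> xs (i - 1))"
      unfolding i_def seg_index_def by (intro not_less_Least) auto
    with False \<open>1 \<le> i\<close> show ?thesis by auto
  qed
qed

lemma Qmap_mem_Ivl:
  assumes "xs 0 < xs N" "xs (i - 1) < xs i" "xs (i - 1) \<le> x" "x \<le> xs i"
  shows "Qmap xs N i x \<in> Ivl xs N"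
proof -
  define D s c where "D = xs N - xs 0" and "s = xs i - xs (i - 1)"
    and "c = xs N * xs (i - 1) - xs 0 * xs i"
  have pos: "D > 0" "s > 0" using assms(1,2) unfolding D_def s_def by auto
  have Q: "Qmap xs N i x = (x * D - c) / s"
    unfolding Qmap_def D_def[symmetric] s_def[symmetric] c_def[symmetric] using pos
    by (simp add: field_simps)
  have "x * D - c - xs 0 * s = (x - xs (i - 1)) * D" "xs N * s - (x * D - c) = (xs i - x) * D"
    unfolding D_def s_def c_def by (simp_all add: algebra_simps)
  then have "Qmap xs N i x - xs 0 = (x - xs (i - 1)) * D / s"
       "xs N - Qmap xs N i x = (xs i - x) * D / s"
    unfolding Q using pos by (simp_all add: field_simps)
  moreover have "(x - xs (i - 1)) * D / s \<ge> 0" "(xs i - x) * D / s \<ge> 0"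
    using pos assms(3,4) by simp_all
  ultimately show ?thesis unfolding Ivl_def by simp
qed


locale scaled_partition =
  fixes xs :: "nat \<Rightarrow> real" and N :: nat and \<alpha> :: "nat \<Rightarrow> nat \<Rightarrow> real \<Rightarrow> real" and a :: real
  assumes N_pos: "1 \<le> N"
    and partition: "\<forall>i<N. xs i < xs (Suc i)"
    and scaling_bound: "\<And>i r y. 1 \<le> i \<Longrightarrow> i \<le> N \<Longrightarrow> y \<in> Ivl xs N \<Longrightarrow> \<bar>\<alpha> i r y\<bar> \<le> a"
    and scaling_less_1: "a < 1"
begin

abbreviation I :: "real set" where
  "I \<equiv> Ivl xs N"

lemma endpoints_less: "xs 0 < xs N"
  using partition_less[OF partition, of 0 N] N_pos by simp

lemma left_endpoint_mem: "xs 0 \<in> I"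
  using endpoints_less by (simp add: Ivl_def)

lemma compact_I: "compact I"
  by (simp add: Ivl_def)

lemma I_nonempty: "I \<noteq> {}"
  using left_endpoint_mem by auto

lemma scaling_bound_nonneg: "0 \<le> a"
  using scaling_bound[OF order.refl N_pos left_endpoint_mem, of 0] by simp

lemma Top_apply:
  assumes "x \<in> I"
  obtains k y where "\<bar>k\<bar> \<le> a" "y \<in> I"
    "\<And>f b g. Top xs N \<alpha> f b r g x = f x + k * (g y - b r y)"
proof -
  define i where "i = seg_index xs N x"
  note seg = seg_index_bounds[OF N_pos assms, folded i_def]
  have "xs (i - 1) < xs i"
    using partition_less[OF partition, of "i - 1" i] seg by simp
  then have "Qmap xs N i x \<in> I"
    using seg endpoints_less by (intro Qmap_mem_Ivl) auto
  with seg show ?thesis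
    by (intro that[of "\<alpha> i r (Qmap xs N i x)" "Qmap xs N i x"] scaling_bound)
      (simp_all add: Top_def Let_def i_def)
qed

lemma Top_dist:
  assumes "x \<in> I"
    and f: "\<And>y. y \<in> I \<Longrightarrow> \<bar>f1 y - f2 y\<bar> \<le> e"
    and b: "\<And>y. y \<in> I \<Longrightarrow> \<bar>b1 r y - b2 r y\<bar> \<le> e'"
    and uv: "\<And>y. y \<in> I \<Longrightarrow> \<bar>u y - v y\<bar> \<le> c"
  shows "\<bar>Top xs N \<alpha> f1 b1 r u x - Top xs N \<alpha> f2 b2 r v x\<bar> \<le> e + a * (c + e')"
proof -
  obtain k y where k: "\<bar>k\<bar> \<le> a" and "y \<in> I"
    and T: "\<And>f b g. Top xs N \<alpha> f b r g x = f x + k * (g y - b r y)"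
    using Top_apply[OF \<open>x \<in> I\<close>, where r = r] by blast
  have "\<bar>(u y - v y) - (b1 r y - b2 r y)\<bar> \<le> c + e'"
    using uv[OF \<open>y \<in> I\<close>] b[OF \<open>y \<in> I\<close>] by linarith
  then have "\<bar>k * ((u y - v y) - (b1 r y - b2 r y))\<bar> \<le> a * (c + e')"
    unfolding abs_mult using k scaling_bound_nonneg by (intro mult_mono) auto
  moreover have "Top xs N \<alpha> f1 b1 r u x - Top xs N \<alpha> f2 b2 r v x
      = (f1 x - f2 x) + k * ((u y - v y) - (b1 r y - b2 r y))"
    unfolding T by (simp add: algebra_simps)
  ultimately show ?thesis
    using f[OF \<open>x \<in> I\<close>] by linarith
qed

lemma Tcomp_dist:
  assumes f: "\<And>y. y \<in> I \<Longrightarrow> \<bar>f1 y - f2 y\<bar> \<le> e"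
    and b: "\<And>r y. y \<in> I \<Longrightarrow> \<bar>b1 r y - b2 r y\<bar> \<le> e'"
    and "\<And>y. y \<in> I \<Longrightarrow> \<bar>u y - v y\<bar> \<le> c" "x \<in> I"
  shows "\<bar>Tcomp xs N \<alpha> f1 b1 n u x - Tcomp xs N \<alpha> f2 b2 n v x\<bar>
    \<le> (e + a * e') / (1 - a) * (1 - a ^ n) + a ^ n * c"
  using assms(3,4)
  \<comment> \<open>The innermost map is the newest one, so the starting functions vary in the induction.\<close>
proof (induction n arbitrary: u v c x)
  case 0
  then show ?case by simp
next
  case (Suc n)
  have "\<bar>Top xs N \<alpha> f1 b1 n u y - Top xs N \<alpha> f2 b2 n v y\<bar> \<le> (e + a * e') + a * c" if "y \<in> I" for y
  proof -
    have "\<bar>Top xs N \<alpha> f1 b1 n u y - Top xs N \<alpha> f2 b2 n v y\<bar> \<le> e + a * (c + e')"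
      by (rule Top_dist) (use that f b Suc.prems(1) in auto)
    then show ?thesis by (simp add: algebra_simps)
  qed
  then have "\<bar>Tcomp xs N \<alpha> f1 b1 (Suc n) u x - Tcomp xs N \<alpha> f2 b2 (Suc n) v x\<bar>
      \<le> (e + a * e') / (1 - a) * (1 - a ^ n) + a ^ n * ((e + a * e') + a * c)"
    using Suc.IH Suc.prems(2) by simp
  also have "\<dots> = (e + a * e') / (1 - a) * (1 - a ^ Suc n) + a ^ Suc n * c"
    using scaling_less_1 by (simp add: field_simps)
  finally show ?case .
qed

lemma Tcomp_contraction:
  assumes "\<And>y. y \<in> I \<Longrightarrow> \<bar>u y - v y\<bar> \<le> c" "x \<in> I"
  shows "\<bar>Tcomp xs N \<alpha> f b n u x - Tcomp xs N \<alpha> f b n v x\<bar> \<le> a ^ n * c"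
  using Tcomp_dist[of f f 0 b b 0, OF _ _ assms] by simp

lemma Tcomp_uniformly_convergent:
  assumes f: "continuous_on I f" and g: "continuous_on I g"
    and b: "\<And>r y. y \<in> I \<Longrightarrow> \<bar>b r y\<bar> \<le> B"
  shows "uniformly_convergent_on I (\<lambda>n. Tcomp xs N \<alpha> f b n g)"
proof -
  define C where "C = supn I f + a * (supn I g + B) + supn I g"
  have "\<bar>Top xs N \<alpha> f b n g y - g y\<bar> \<le> C" if "y \<in> I" for n y
  proof -
    obtain k z where k: "\<bar>k\<bar> \<le> a" and "z \<in> I"
      and T: "\<And>f b g. Top xs N \<alpha> f b n g y = f y + k * (g z - b n z)"
      using Top_apply[OF \<open>y \<in> I\<close>, where r = n] by blast
    have "\<bar>g z - b n z\<bar> \<le> supn I g + B"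
      using abs_le_supn[OF g compact_I \<open>z \<in> I\<close>] b[where r = n, OF \<open>z \<in> I\<close>] by linarith
    then have "\<bar>k * (g z - b n z)\<bar> \<le> a * (supn I g + B)"
      unfolding abs_mult using k scaling_bound_nonneg by (intro mult_mono) auto
    then show ?thesis
      unfolding T C_def using abs_le_supn[OF f compact_I that] abs_le_supn[OF g compact_I that]
      by linarith
  qed
  then have "\<bar>Tcomp xs N \<alpha> f b n (Top xs N \<alpha> f b n g) x - Tcomp xs N \<alpha> f b n g x\<bar> \<le> a ^ n * C"
    if "x \<in> I" for n x
    using that by (intro Tcomp_contraction)
  then have "norm (Tcomp xs N \<alpha> f b (Suc n) g x - Tcomp xs N \<alpha> f b n g x) \<le> a ^ n * C"
    if "x \<in> I" for n x
    using that by simp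
  moreover have "summable (\<lambda>n. a ^ n * C)"
    using scaling_bound_nonneg scaling_less_1 by (intro summable_mult2 summable_geometric) simp
  ultimately show ?thesis
    by (rule uniformly_convergent_on_summable_steps)
qed

lemma self_mem_Cf: "continuous_on I f \<Longrightarrow> f \<in> Cf xs N f"
  by (simp add: Cf_def)

lemma ns_fractal_eqI:
  assumes f: "continuous_on I f"
    and lim: "\<And>g. g \<in> Cf xs N f \<Longrightarrow> uniform_limit I (\<lambda>n. Tcomp xs N \<alpha> f b n g) \<phi> sequentially"
    and outside: "\<And>x. x \<notin> I \<Longrightarrow> \<phi> x = 0"
  shows "ns_fractal xs N \<alpha> f b = \<phi>"
  unfolding ns_fractal_def
proof (rule the_equality)
  fix \<psi> assume \<psi>: "(\<forall>x. x \<notin> I \<longrightarrow> \<psi> x = 0) \<and>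
      (\<forall>g\<in>Cf xs N f. uniform_limit I (\<lambda>n. Tcomp xs N \<alpha> f b n g) \<psi> sequentially)"
  show "\<psi> = \<phi>"
  proof
    fix x
    show "\<psi> x = \<phi> x"
    proof (cases "x \<in> I")
      case True
      have "uniform_limit I (\<lambda>n. Tcomp xs N \<alpha> f b n f) \<psi> sequentially"
        using \<psi> self_mem_Cf[OF f] by blast
      from tendsto_uniform_limitI[OF this True] tendsto_uniform_limitI[OF lim[OF self_mem_Cf[OF f]] True]
      show ?thesis by (rule LIMSEQ_unique)
    qed (use \<psi> outside in auto)
  qed
qed (use lim outside in auto)

lemma ns_fractal_uniform_limit:
  assumes f: "continuous_on I f" and b: "\<And>r y. y \<in> I \<Longrightarrow> \<bar>b r y\<bar> \<le> B"
    and g: "g \<in> Cf xs N f"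
  shows "uniform_limit I (\<lambda>n. Tcomp xs N \<alpha> f b n g) (ns_fractal xs N \<alpha> f b) sequentially"
proof -
  have start_indep: "uniform_limit I (\<lambda>n. Tcomp xs N \<alpha> f b n g') \<phi> sequentially"
    if lim: "uniform_limit I (\<lambda>n. Tcomp xs N \<alpha> f b n f) \<phi> sequentially" and "g' \<in> Cf xs N f"
    for \<phi> g'
  proof (rule uniform_limit_by_null_dist[OF lim])
    have g': "continuous_on I g'" using \<open>g' \<in> Cf xs N f\<close> by (simp add: Cf_def)
    show "dist (Tcomp xs N \<alpha> f b n g' x) (Tcomp xs N \<alpha> f b n f x) \<le> a ^ n * (supn I g' + supn I f)"
      if "x \<in> I" for n x
      unfolding dist_real_def
    proof (rule Tcomp_contraction[OF _ that])
      show "\<bar>g' y - f y\<bar> \<le> supn I g' + supn I f" if "y \<in> I" for y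
        using abs_le_supn[OF g' compact_I that] abs_le_supn[OF f compact_I that] by linarith
    qed
    show "(\<lambda>n. a ^ n * (supn I g' + supn I f)) \<longlonglongrightarrow> 0"
      using scaling_bound_nonneg scaling_less_1
      by (intro tendsto_mult_left_zero LIMSEQ_power_zero) simp
  qed
  obtain l where "uniform_limit I (\<lambda>n. Tcomp xs N \<alpha> f b n f) l sequentially"
    using Tcomp_uniformly_convergent[OF f f, where b = b and B = B] b
    unfolding uniformly_convergent_on_def by blast
  moreover define \<phi> where "\<phi> x = (if x \<in> I then l x else 0)" for x
  ultimately have lim: "uniform_limit I (\<lambda>n. Tcomp xs N \<alpha> f b n f) \<phi> sequentially"
    by (simp add: uniform_limit_cong'[of I _ _ \<phi> l])
  have outside: "\<phi> x = 0" if "x \<notin> I" for x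
    using that by (simp add: \<phi>_def)
  have "ns_fractal xs N \<alpha> f b = \<phi>"
    using f start_indep[OF lim] outside by (rule ns_fractal_eqI)
  with start_indep[OF lim g] show ?thesis
    by simp
qed

lemma ns_fractal_dist:
  assumes "continuous_on I f1" "continuous_on I f2"
    and "\<And>r y. y \<in> I \<Longrightarrow> \<bar>b1 r y\<bar> \<le> B" "\<And>r y. y \<in> I \<Longrightarrow> \<bar>b2 r y\<bar> \<le> B'"
    and f: "\<And>y. y \<in> I \<Longrightarrow> \<bar>f1 y - f2 y\<bar> \<le> e"
    and b: "\<And>r y. y \<in> I \<Longrightarrow> \<bar>b1 r y - b2 r y\<bar> \<le> e'"
    and "x \<in> I"
  shows "\<bar>ns_fractal xs N \<alpha> f1 b1 x - ns_fractal xs N \<alpha> f2 b2 x\<bar> \<le> (e + a * e') / (1 - a)"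
proof -
  have "uniform_limit I (\<lambda>n. Tcomp xs N \<alpha> f1 b1 n f1) (ns_fractal xs N \<alpha> f1 b1) sequentially"
    and "uniform_limit I (\<lambda>n. Tcomp xs N \<alpha> f2 b2 n f2) (ns_fractal xs N \<alpha> f2 b2) sequentially"
    using assms(1-4) by (blast intro: ns_fractal_uniform_limit self_mem_Cf)+
  then have "(\<lambda>n. \<bar>Tcomp xs N \<alpha> f1 b1 n f1 x - Tcomp xs N \<alpha> f2 b2 n f2 x\<bar>)
      \<longlonglongrightarrow> \<bar>ns_fractal xs N \<alpha> f1 b1 x - ns_fractal xs N \<alpha> f2 b2 x\<bar>"
    using \<open>x \<in> I\<close> by (intro tendsto_rabs tendsto_diff tendsto_uniform_limitI)
  moreover have "(\<lambda>n. (e + a * e') / (1 - a) * (1 - a ^ n) + a ^ n * e)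
      \<longlonglongrightarrow> (e + a * e') / (1 - a) * (1 - 0) + 0 * e"
    using scaling_bound_nonneg scaling_less_1 by (intro tendsto_intros LIMSEQ_power_zero) auto
  moreover have "\<bar>Tcomp xs N \<alpha> f1 b1 n f1 x - Tcomp xs N \<alpha> f2 b2 n f2 x\<bar>
      \<le> (e + a * e') / (1 - a) * (1 - a ^ n) + a ^ n * e" for n
    by (rule Tcomp_dist) (use f b \<open>x \<in> I\<close> in auto)
  ultimately show ?thesis
    by (auto intro: LIMSEQ_le)
qed

lemma frac_op_supn_dist:
  assumes D_cont: "\<And>g. g \<in> D \<Longrightarrow> continuous_on I g"
    and L_maps: "\<And>r g. g \<in> D \<Longrightarrow> L r g \<in> D"
    and L_bdd: "\<And>g. g \<in> D \<Longrightarrow> \<exists>B. \<forall>r. \<forall>y\<in>I. \<bar>L r g y\<bar> \<le> B"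
    and L_lip: "\<And>r. op_lipschitz I D (L r)"
    and L_const: "\<And>r. op_lip_const I D (L r) \<le> \<Lambda>"
    and "f \<in> D" "h \<in> D"
  shows "supn I (\<lambda>x. frac_op xs N \<alpha> L f x - frac_op xs N \<alpha> L h x)
    \<le> (1 + \<Lambda> * a) / (1 - a) * supn I (\<lambda>x. f x - h x)"
proof -
  define e where "e = supn I (\<lambda>x. f x - h x)"
  have cont_diff: "continuous_on I (\<lambda>x. L r f x - L r h x)" for r
    using D_cont L_maps \<open>f \<in> D\<close> \<open>h \<in> D\<close> by (intro continuous_on_diff) auto
  have cont_fh: "continuous_on I (\<lambda>x. f x - h x)"
    using D_cont \<open>f \<in> D\<close> \<open>h \<in> D\<close> by (intro continuous_on_diff) auto
  then have "0 \<le> e"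
    unfolding e_def using compact_I I_nonempty by (rule supn_nonneg)
  have f_h: "\<bar>f y - h y\<bar> \<le> e" if "y \<in> I" for y
    unfolding e_def using cont_fh compact_I that by (rule abs_le_supn)
  have Lf_Lh: "\<bar>L r f y - L r h y\<bar> \<le> \<Lambda> * e" if "y \<in> I" for r y
  proof -
    have "\<bar>L r f y - L r h y\<bar> \<le> supn I (\<lambda>x. L r f x - L r h x)"
      using cont_diff compact_I that by (rule abs_le_supn)
    also have "\<dots> \<le> op_lip_const I D (L r) * e"
      unfolding e_def using L_lip \<open>f \<in> D\<close> \<open>h \<in> D\<close> \<open>0 \<le> e\<close> e_def
      by (intro op_lipschitz_supn_le) auto
    also have "\<dots> \<le> \<Lambda> * e"
      using L_const \<open>0 \<le> e\<close> by (rule mult_right_mono)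
    finally show ?thesis .
  qed
  obtain Bf Bh where Bf: "\<And>r y. y \<in> I \<Longrightarrow> \<bar>L r f y\<bar> \<le> Bf"
    and Bh: "\<And>r y. y \<in> I \<Longrightarrow> \<bar>L r h y\<bar> \<le> Bh"
    using L_bdd \<open>f \<in> D\<close> \<open>h \<in> D\<close> by meson
  have "\<bar>frac_op xs N \<alpha> L f x - frac_op xs N \<alpha> L h x\<bar> \<le> (e + a * (\<Lambda> * e)) / (1 - a)"
    if "x \<in> I" for x
    unfolding frac_op_def
    by (rule ns_fractal_dist[where B = Bf and B' = Bh])
      (use D_cont \<open>f \<in> D\<close> \<open>h \<in> D\<close> Bf Bh f_h Lf_Lh that in auto)
  moreover have "(e + a * (\<Lambda> * e)) / (1 - a) = (1 + \<Lambda> * a) / (1 - a) * e"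
    by (simp add: algebra_simps)
  ultimately show ?thesis
    unfolding e_def[symmetric] using I_nonempty by (intro supn_le) auto
qed

end

theorem mainTheorem4:
  fixes xs :: "nat \<Rightarrow> real" and N :: nat and d :: real
    and \<alpha> :: "nat \<Rightarrow> nat \<Rightarrow> real \<Rightarrow> real"
    and L :: "nat \<Rightarrow> (real \<Rightarrow> real) \<Rightarrow> (real \<Rightarrow> real)"
  assumes N: "1 \<le> N"
    and part: "\<forall>i<N. xs i < xs (Suc i)"
    and d: "0 < d" "d \<le> 1"
    and alpha_cont: "\<forall>i r. 1 \<le> i \<and> i \<le> N \<longrightarrow> continuous_on (Ivl xs N) (\<alpha> i r)"
    and alpha_bdd: "bdd_above {\<bar>\<alpha> i r x\<bar> | i r x. 1 \<le> i \<and> i \<le> N \<and> x \<in> Ivl xs N}"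
    and alpha_lt1: "alpha_norm xs N \<alpha> < 1"
    and L_maps: "\<forall>r. \<forall>g\<in>Lipd d (Ivl xs N). L r g \<in> Lipd d (Ivl xs N)"
    and L_ends: "\<forall>r. \<forall>g\<in>Lipd d (Ivl xs N). L r g (xs 0) = g (xs 0) \<and> L r g (xs N) = g (xs N)"
    and L_opnorm: "\<exists>M. \<forall>r. \<forall>g\<in>Lipd d (Ivl xs N). supn (Ivl xs N) (L r g) \<le> M * supn (Ivl xs N) g"
    and L_lip: "\<forall>r. op_lipschitz (Ivl xs N) (Lipd d (Ivl xs N)) (L r)"
    and L_lip_bdd: "bdd_above (range (\<lambda>r. op_lip_const (Ivl xs N) (Lipd d (Ivl xs N)) (L r)))"
  shows "op_lipschitz (Ivl xs N) (Lipd d (Ivl xs N)) (frac_op xs N \<alpha> L)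
    \<and> op_lip_const (Ivl xs N) (Lipd d (Ivl xs N)) (frac_op xs N \<alpha> L)
        \<le> (1 + (SUP r. op_lip_const (Ivl xs N) (Lipd d (Ivl xs N)) (L r)) * alpha_norm xs N \<alpha>)
           / (1 - alpha_norm xs N \<alpha>)"
proof -
  \<comment> \<open>Continuity of the \<alpha>_i_r, d \<le> 1 and the endpoint conditions on L_r only serve to make
    f^\<alpha>_b a continuous interpolant of f; the Lipschitz estimate does not need them.\<close>
  define a where "a = alpha_norm xs N \<alpha>"
  define \<Lambda> where "\<Lambda> = (SUP r. op_lip_const (Ivl xs N) (Lipd d (Ivl xs N)) (L r))"
  interpret scaled_partition xs N \<alpha> a
  proof
    show "\<bar>\<alpha> i r y\<bar> \<le> a" if "1 \<le> i" "i \<le> N" "y \<in> Ivl xs N" for i r y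
      unfolding a_def alpha_norm_def using that by (intro cSup_upper[OF _ alpha_bdd]) auto
  qed (use N part alpha_lt1 a_def in auto)
  have cont: "continuous_on (Ivl xs N) g" if "g \<in> Lipd d (Ivl xs N)" for g
    using d(1) that by (rule Lipd_imp_continuous_on)
  note maps = L_maps[rule_format] and lip = L_lip[rule_format]
  obtain M where M: "\<And>r g. g \<in> Lipd d (Ivl xs N) \<Longrightarrow> supn (Ivl xs N) (L r g) \<le> M * supn (Ivl xs N) g"
    using L_opnorm by blast
  have bdd: "\<exists>B. \<forall>r. \<forall>y\<in>Ivl xs N. \<bar>L r g y\<bar> \<le> B" if "g \<in> Lipd d (Ivl xs N)" for g
    using abs_le_supn[OF cont[OF maps[OF that]] compact_I] M[OF that] order_trans by blast
  have L_const: "op_lip_const (Ivl xs N) (Lipd d (Ivl xs N)) (L r) \<le> \<Lambda>" for r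
    unfolding \<Lambda>_def by (rule cSUP_upper[OF _ L_lip_bdd]) simp
  then have "0 \<le> \<Lambda>"
    using op_lip_const_nonneg[OF lip, of 0] by (meson order_trans)
  then have "0 < (1 + \<Lambda> * a) / (1 - a)"
    using scaling_bound_nonneg scaling_less_1 by (intro divide_pos_pos add_pos_nonneg) auto
  moreover have "supn (Ivl xs N) (\<lambda>x. frac_op xs N \<alpha> L u x - frac_op xs N \<alpha> L v x)
      \<le> (1 + \<Lambda> * a) / (1 - a) * supn (Ivl xs N) (\<lambda>x. u x - v x)"
    if "u \<in> Lipd d (Ivl xs N)" "v \<in> Lipd d (Ivl xs N)" for u v
    using cont maps bdd lip L_const that by (rule frac_op_supn_dist)
  ultimately show ?thesis
    unfolding a_def[symmetric] \<Lambda>_def[symmetric] by (rule op_lipschitz_with_const)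
qed

end
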